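(* Let $\mathcal{X}=\{1,\dots,n\}$, let $\pi$ be a strictly positive probability distribution on $\mathcal{X}$, let $P$ be a transition matrix with $\pi P=\pi$, and let $G$ be the Gibbs kernel induced by a partition $\mathcal{X}=\bigsqcup_{i=1}^k\mathcal{O}_i$. Then $\operatorname{Tr}(GP)=\operatorname{Tr}(PG)=\operatorname{Tr}(\overline{P})$, where $\overline{P}$ is the projection chain of $P$ on this partition.
   Context: The Gibbs kernel is $G(x,y)=\pi(y)/\pi(\mathcal{O}(x))$ if $y\in\mathcal{O}(x)$ and $0$ otherwise, where $\mathcal{O}(x)$ is the block containing $x$ and $\pi(\mathcal{O})=\sum_{z\in\mathcal{O}}\pi(z)$. The projection chain is the $k\times k$ matrix $\overline{P}(i,j)=\frac{1}{\pi(\mathcal{O}_i)}\sum_{x\in\mathcal{O}_i,\,y\in\mathcal{O}_j}\pi(x)P(x,y)$. *)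

theory Defs
  imports "HOL-Analysis.Analysis"
begin

text \<open>A partition of X into k nonempty blocks O_1,...,O_k is given by a block-label
  map blk : X -> {1..k} that is onto; O_i = {x in X. blk x = i}.\<close>

definition block :: "nat \<Rightarrow> (nat \<Rightarrow> nat) \<Rightarrow> nat \<Rightarrow> nat set" where
  "block n blk i = {x \<in> {1..n}. blk x = i}"

definition pimass :: "(nat \<Rightarrow> real) \<Rightarrow> nat set \<Rightarrow> real" where
  "pimass \<pi> B = (\<Sum>z\<in>B. \<pi> z)"

definition gibbs_kernel :: "nat \<Rightarrow> (nat \<Rightarrow> real) \<Rightarrow> (nat \<Rightarrow> nat) \<Rightarrow> nat \<Rightarrow> nat \<Rightarrow> real" where
  "gibbs_kernel n \<pi> blk x y =
     (if y \<in> block n blk (blk x) then \<pi> y / pimass \<pi> (block n blk (blk x)) else 0)"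

definition projection_chain ::
  "nat \<Rightarrow> (nat \<Rightarrow> real) \<Rightarrow> (nat \<Rightarrow> nat \<Rightarrow> real) \<Rightarrow> (nat \<Rightarrow> nat) \<Rightarrow> nat \<Rightarrow> nat \<Rightarrow> real" where
  "projection_chain n \<pi> P blk i j =
     (1 / pimass \<pi> (block n blk i)) *
     (\<Sum>x\<in>block n blk i. \<Sum>y\<in>block n blk j. \<pi> x * P x y)"

definition matmul :: "nat \<Rightarrow> (nat \<Rightarrow> nat \<Rightarrow> real) \<Rightarrow> (nat \<Rightarrow> nat \<Rightarrow> real) \<Rightarrow> nat \<Rightarrow> nat \<Rightarrow> real" where
  "matmul n A B x y = (\<Sum>z\<in>{1..n}. A x z * B z y)"

definition mtrace :: "nat \<Rightarrow> (nat \<Rightarrow> nat \<Rightarrow> real) \<Rightarrow> real" where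
  "mtrace m A = (\<Sum>i\<in>{1..m}. A i i)"

end

theory Submission
  imports Defs
begin

text \<open>GP and PG have the same trace by cyclicity of the trace. Expanding tr(PG) gives the
  sum over x and over y in the block of x of \<open>\<pi>(x) P(x,y) / \<pi>(\<O>(x))\<close>; grouping the
  x by blocks yields the diagonal entries of the projection chain.\<close>

lemma mtrace_matmul_commute: "mtrace n (matmul n A B) = mtrace n (matmul n B A)"
  unfolding mtrace_def matmul_def by (subst sum.swap) (simp add: mult.commute)

lemma sum_over_blocks:
  "(\<Sum>x\<in>{1..n}. g x) = (\<Sum>i\<in>blk ` {1..n}. \<Sum>x\<in>block n blk i. g x)"
  unfolding block_def by (rule sum.image_gen) simp

lemma gibbs_kernel_apply:
  assumes "y \<in> {1..n}"
  shows "gibbs_kernel n \<pi> blk x y =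
    (if blk y = blk x then \<pi> y / pimass \<pi> (block n blk (blk x)) else 0)"
  using assms unfolding gibbs_kernel_def block_def by simp

lemma mtrace_matmul_gibbs_kernel:
  "mtrace n (matmul n P (gibbs_kernel n \<pi> blk)) =
    (\<Sum>i\<in>blk ` {1..n}. projection_chain n \<pi> P blk i i)"
proof -
  let ?m = "\<lambda>i. pimass \<pi> (block n blk i)"
  have "mtrace n (matmul n P (gibbs_kernel n \<pi> blk))
      = (\<Sum>x\<in>{1..n}. \<Sum>y\<in>{1..n}. if blk y = blk x then \<pi> x * P x y / ?m (blk x) else 0)"
    unfolding mtrace_def matmul_def
    by (intro sum.cong refl) (auto simp: gibbs_kernel_apply)
  also have "\<dots> = (\<Sum>x\<in>{1..n}. \<Sum>y\<in>block n blk (blk x). \<pi> x * P x y / ?m (blk x))"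
    unfolding block_def by (rule sum.cong[OF refl]) (rule sum.inter_filter[symmetric], simp)
  also have "\<dots> = (\<Sum>i\<in>blk ` {1..n}. \<Sum>x\<in>block n blk i. \<Sum>y\<in>block n blk i. \<pi> x * P x y / ?m i)"
    by (subst sum_over_blocks) (auto simp: block_def intro!: sum.cong)
  also have "\<dots> = (\<Sum>i\<in>blk ` {1..n}. projection_chain n \<pi> P blk i i)"
    unfolding projection_chain_def by (simp add: sum_distrib_left sum_divide_distrib)
  finally show ?thesis .
qed

theorem lemma4p1:
  fixes n k :: nat and \<pi> :: "nat \<Rightarrow> real" and P :: "nat \<Rightarrow> nat \<Rightarrow> real"
    and blk :: "nat \<Rightarrow> nat"
  assumes pi_pos: "\<forall>x\<in>{1..n}. \<pi> x > 0"
    and pi_sum: "(\<Sum>x\<in>{1..n}. \<pi> x) = 1"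
    and P_nonneg: "\<forall>x\<in>{1..n}. \<forall>y\<in>{1..n}. P x y \<ge> 0"
    and P_stoch: "\<forall>x\<in>{1..n}. (\<Sum>y\<in>{1..n}. P x y) = 1"
    and stationary: "\<forall>y\<in>{1..n}. (\<Sum>x\<in>{1..n}. \<pi> x * P x y) = \<pi> y"
    and blk_onto: "blk ` {1..n} = {1..k}"
  shows "mtrace n (matmul n (gibbs_kernel n \<pi> blk) P) = mtrace n (matmul n P (gibbs_kernel n \<pi> blk))
       \<and> mtrace n (matmul n P (gibbs_kernel n \<pi> blk)) = mtrace k (projection_chain n \<pi> P blk)"
proof -
  have "mtrace n (matmul n P (gibbs_kernel n \<pi> blk)) = mtrace k (projection_chain n \<pi> P blk)"
    unfolding mtrace_matmul_gibbs_kernel blk_onto mtrace_def[of k] ..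
  then show ?thesis
    using mtrace_matmul_commute by simp
qed

end
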